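(* Let $\phi$ be a flow of a compact metric space $X$. If $Sing(\phi)$ is dynamically isolated, then there is $\beta_0>0$ such that $diam(\phi_{\mathbb{R}}(x))\ge\beta_0$ for every $x\in X\setminus Sing(\phi)$.
   Context: A flow is a continuous $\phi:\mathbb{R}\times X\to X$ with $\phi_0=\mathrm{id}$, $\phi_{t+s}=\phi_t\circ\phi_s$; $\phi_{\mathbb{R}}(x)=\{\phi_t(x):t\in\mathbb{R}\}$; $Sing(\phi)$ is the set of fixed points. A compact invariant set $K$ is dynamically isolated if there is a neighborhood $U$ of $K$ with $K=\bigcap_{t\in\mathbb{R}}\phi_t(U)$. *)

theory Defs
  imports "HOL-Analysis.Analysis"
begin

definition is_flow :: "'a::metric_space set \<Rightarrow> (real \<Rightarrow> 'a \<Rightarrow> 'a) \<Rightarrow> bool" where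
  "is_flow X phi \<longleftrightarrow>
     continuous_on (UNIV \<times> X) (\<lambda>(t, x). phi t x) \<and>
     (\<forall>t. \<forall>x\<in>X. phi t x \<in> X) \<and>
     (\<forall>x\<in>X. phi 0 x = x) \<and>
     (\<forall>t s. \<forall>x\<in>X. phi (t + s) x = phi t (phi s x))"

definition orbit :: "(real \<Rightarrow> 'a \<Rightarrow> 'a) \<Rightarrow> 'a \<Rightarrow> 'a set" where
  "orbit phi x = {phi t x | t. True}"

definition Sing :: "'a set \<Rightarrow> (real \<Rightarrow> 'a \<Rightarrow> 'a) \<Rightarrow> 'a set" where
  "Sing X phi = {x \<in> X. \<forall>t. phi t x = x}"

definition nbhd_in :: "'a::topological_space set \<Rightarrow> 'a set \<Rightarrow> 'a set \<Rightarrow> bool" where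
  "nbhd_in X K U \<longleftrightarrow> U \<subseteq> X \<and> (\<exists>V. open V \<and> K \<subseteq> V \<and> V \<inter> X \<subseteq> U)"

definition dyn_isolated :: "'a::metric_space set \<Rightarrow> (real \<Rightarrow> 'a \<Rightarrow> 'a) \<Rightarrow> 'a set \<Rightarrow> bool" where
  "dyn_isolated X phi K \<longleftrightarrow>
     K \<subseteq> X \<and> compact K \<and> (\<forall>t. phi t ` K = K) \<and>
     (\<exists>U. nbhd_in X K U \<and> K = (\<Inter>t. phi t ` U))"

end

theory Submission
  imports Defs
begin

text \<open>If the orbit diameters of non-singular points could be arbitrarily small, a sequence of
  such points would accumulate at some l. Every displacement dist (phi t y) y of a point y is
  bounded by the diameter of its orbit, so by continuity l is singular. But l has a
  neighbourhood V with V \<inter> X \<subseteq> U, where U isolates Sing: a point close to l with a small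
  orbit has its whole orbit in U, and an orbit contained in U lies in \<Inter>t. phi t ` U = Sing.\<close>

lemma seq_tendsto_zero_if_no_positive_lower_bound:
  fixes f :: "'b \<Rightarrow> real"
  assumes "\<And>z. z \<in> S \<Longrightarrow> 0 \<le> f z" and "\<not> (\<exists>b>0. \<forall>z \<in> S. f z \<ge> b)"
  obtains x where "\<And>n. x n \<in> S" and "(\<lambda>n. f (x n)) \<longlonglongrightarrow> 0"
proof -
  have "\<exists>x \<in> S. f x < inverse (real (Suc n))" for n
    using assms(2) by (auto simp: not_le)
  then obtain x where x: "\<And>n. x n \<in> S" and small: "\<And>n. f (x n) < inverse (real (Suc n))"
    by metis
  have "(\<lambda>n. f (x n)) \<longlonglongrightarrow> 0"
  proof (rule tendsto_sandwich)
    show "\<forall>\<^sub>F n in sequentially. 0 \<le> f (x n)"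
      using assms(1) x by simp
    show "\<forall>\<^sub>F n in sequentially. f (x n) \<le> inverse (real (Suc n))"
      using small by (simp add: less_imp_le)
  qed (rule tendsto_const, rule LIMSEQ_inverse_real_of_nat)
  with x show ?thesis
    by (rule that)
qed

lemma is_flowD:
  assumes "is_flow X phi"
  shows is_flow_continuous_on: "continuous_on (UNIV \<times> X) (\<lambda>(t, x). phi t x)"
    and is_flow_in: "x \<in> X \<Longrightarrow> phi t x \<in> X"
    and is_flow_zero: "x \<in> X \<Longrightarrow> phi 0 x = x"
    and is_flow_add: "x \<in> X \<Longrightarrow> phi (t + s) x = phi t (phi s x)"
  using assms unfolding is_flow_def by auto

lemma is_flow_continuous_on_time:
  assumes "is_flow X phi"
  shows "continuous_on X (phi t)"
proof -
  have "continuous_on X ((\<lambda>(t, x). phi t x) \<circ> (\<lambda>x. (t, x)))"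
    by (rule continuous_on_compose, intro continuous_intros)
       (rule continuous_on_subset[OF is_flow_continuous_on[OF assms]], auto)
  then show ?thesis
    by (simp add: o_def)
qed

lemma is_flow_orbit_subset:
  assumes "is_flow X phi" "x \<in> X"
  shows "orbit phi x \<subseteq> X"
  using is_flow_in[OF assms] unfolding orbit_def by auto

lemma dist_flow_le_diameter_orbit:
  assumes "compact X" "is_flow X phi" "x \<in> X"
  shows "dist (phi t x) x \<le> diameter (orbit phi x)"
proof -
  have "bounded (orbit phi x)"
    using is_flow_orbit_subset[OF assms(2,3)] compact_imp_bounded[OF assms(1)] bounded_subset
    by blast
  moreover have "phi t x \<in> orbit phi x" "x \<in> orbit phi x"
    using is_flow_zero[OF assms(2,3)] unfolding orbit_def by (auto intro: exI[of _ 0])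
  ultimately show ?thesis
    by (rule diameter_bounded_bound)
qed

lemma orbit_subset_imp_mem_Inter_image:
  assumes "is_flow X phi" "x \<in> X" "orbit phi x \<subseteq> U"
  shows "x \<in> (\<Inter>t. phi t ` U)"
proof
  fix t
  have "x = phi t (phi (-t) x)"
    using is_flow_add[OF assms(1,2), of t "-t"] is_flow_zero[OF assms(1,2)] by simp
  moreover have "phi (-t) x \<in> U"
    using assms(3) unfolding orbit_def by blast
  ultimately show "x \<in> phi t ` U"
    by blast
qed

lemma limit_of_shrinking_orbits_in_Sing:
  assumes "compact X" "is_flow X phi"
    and "\<And>n. y n \<in> X" "y \<longlonglongrightarrow> l" "l \<in> X"
    and "(\<lambda>n. diameter (orbit phi (y n))) \<longlonglongrightarrow> 0"
  shows "l \<in> Sing X phi"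
proof -
  have "phi t l = l" for t
  proof -
    have "(\<lambda>n. phi t (y n)) \<longlonglongrightarrow> phi t l"
      using continuous_on_tendsto_compose[OF is_flow_continuous_on_time[OF assms(2)] assms(4,5)]
        assms(3) by simp
    then have "(\<lambda>n. dist (phi t (y n)) (y n)) \<longlonglongrightarrow> dist (phi t l) l"
      using assms(4) by (rule tendsto_dist)
    then have "dist (phi t l) l \<le> 0"
      using assms(6) dist_flow_le_diameter_orbit[OF assms(1,2,3)]
      by (intro tendsto_le[OF trivial_limit_sequentially]) auto
    then show ?thesis
      by simp
  qed
  then show ?thesis
    using assms(5) unfolding Sing_def by blast
qed

lemma diameter_orbit_nonneg:
  assumes "compact X" "is_flow X phi" "x \<in> X"
  shows "0 \<le> diameter (orbit phi x)"
  using order_trans[OF zero_le_dist dist_flow_le_diameter_orbit[OF assms]] .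

lemma small_orbits_near_isolated_set:
  assumes "compact X" "is_flow X phi" "dyn_isolated X phi K" "l \<in> K"
  obtains e where "e > 0"
    and "\<And>x. x \<in> X \<Longrightarrow> dist x l < e \<Longrightarrow> diameter (orbit phi x) < e \<Longrightarrow> x \<in> K"
proof -
  obtain U where "nbhd_in X K U" and K_eq: "K = (\<Inter>t. phi t ` U)"
    using assms(3) unfolding dyn_isolated_def by blast
  then obtain V where "open V" "K \<subseteq> V" "V \<inter> X \<subseteq> U"
    unfolding nbhd_in_def by blast
  then obtain e0 where "e0 > 0" "ball l e0 \<subseteq> V"
    using assms(4) open_contains_ball by blast
  define e where "e = e0 / 2"
  have "e > 0" and ball_V: "ball l (2 * e) \<subseteq> V"
    using \<open>e0 > 0\<close> \<open>ball l e0 \<subseteq> V\<close> unfolding e_def by simp_all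
  have "x \<in> K" if "x \<in> X" "dist x l < e" "diameter (orbit phi x) < e" for x
  proof -
    have "orbit phi x \<subseteq> ball l (2 * e)"
    proof
      fix z assume "z \<in> orbit phi x"
      then obtain t where "z = phi t x"
        unfolding orbit_def by blast
      then have "dist z x < e"
        using dist_flow_le_diameter_orbit[OF assms(1,2) \<open>x \<in> X\<close>, of t] that(3) by simp
      moreover have "dist l z \<le> dist l x + dist x z"
        by (rule dist_triangle)
      ultimately show "z \<in> ball l (2 * e)"
        using that(2) by (simp add: dist_commute)
    qed
    then have "orbit phi x \<subseteq> U"
      using ball_V \<open>V \<inter> X \<subseteq> U\<close> is_flow_orbit_subset[OF assms(2) that(1)] by blast
    then show ?thesis
      unfolding K_eq by (rule orbit_subset_imp_mem_Inter_image[OF assms(2) that(1)])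
  qed
  with \<open>e > 0\<close> show ?thesis
    by (rule that)
qed

theorem mainTheorem12:
  fixes X :: "'a::metric_space set" and phi :: "real \<Rightarrow> 'a \<Rightarrow> 'a"
  assumes "compact X" and "is_flow X phi"
    and "dyn_isolated X phi (Sing X phi)"
  shows "\<exists>\<beta>0>0. \<forall>x \<in> X - Sing X phi. diameter (orbit phi x) \<ge> \<beta>0"
proof (rule ccontr)
  assume no_bound: "\<not> ?thesis"
  have nonneg: "\<And>z. z \<in> X - Sing X phi \<Longrightarrow> 0 \<le> diameter (orbit phi z)"
    using diameter_orbit_nonneg[OF assms(1,2)] by blast
  obtain x where x: "\<And>n. x n \<in> X - Sing X phi"
    and "(\<lambda>n. diameter (orbit phi (x n))) \<longlonglongrightarrow> 0"
    using seq_tendsto_zero_if_no_positive_lower_bound[of "X - Sing X phi" "\<lambda>z. diameter (orbit phi z)"]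
      nonneg no_bound by blast
  moreover obtain l r where "l \<in> X" "strict_mono r" and lim: "(x \<circ> r) \<longlonglongrightarrow> l"
    using compact_imp_seq_compact[OF assms(1)] x unfolding seq_compact_def by (metis DiffD1)
  ultimately have shrink: "(\<lambda>n. diameter (orbit phi ((x \<circ> r) n))) \<longlonglongrightarrow> 0"
    using LIMSEQ_subseq_LIMSEQ by (simp add: o_def)
  have "l \<in> Sing X phi"
    using limit_of_shrinking_orbits_in_Sing[OF assms(1,2) _ lim \<open>l \<in> X\<close> shrink] x by simp
  then obtain e where "e > 0"
    and isolated: "\<And>z. z \<in> X \<Longrightarrow> dist z l < e \<Longrightarrow> diameter (orbit phi z) < e \<Longrightarrow> z \<in> Sing X phi"
    using small_orbits_near_isolated_set[OF assms] by blast
  have "\<forall>\<^sub>F n in sequentially. dist ((x \<circ> r) n) l < e \<and> diameter (orbit phi ((x \<circ> r) n)) < e"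
    using tendstoD[OF lim \<open>e > 0\<close>] order_tendstoD(2)[OF shrink \<open>e > 0\<close>] by (rule eventually_conj)
  then have "\<forall>\<^sub>F n in sequentially. False"
  proof eventually_elim
    case (elim n)
    then show False
      using isolated[of "(x \<circ> r) n"] x[of "r n"] by simp
  qed
  then show False
    by simp
qed

end
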